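(* Let $G$ be a group and $A_0\subseteq\operatorname{Aut}(G)$ a subgroup such that $G$ is an $\mathcal{L}(A_0)$-equational domain. Let $I$ be a set and $H=\prod_{i\in I}G$ the direct power of $G$, whose elements are tuples $(g_i\mid i\in I)$. Let $\mathcal{P}$ be a set of permutations of $I$ that is transitive on $I$ (for all $i,j\in I$ there is $\pi\in\mathcal{P}$ with $\pi(i)=j$). For $\phi\in A_0$ and $\pi\in\mathcal{P}$ define automorphisms of $H$ by $f_\phi((g_i\mid i\in I))=(\phi(g_i)\mid i\in I)$ and $\sigma_\pi((g_i\mid i\in I))=(g_{\pi(i)}\mid i\in I)$, and let $A\subseteq\operatorname{Aut}(H)$ be the group generated by $\{f_\phi,\sigma_\pi\mid\phi\in A_0,\pi\in\mathcal{P}\}$. Then $H$ is an $\mathcal{L}(A)$-equational domain.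
   Context: For a group $K$ and a subgroup $B\subseteq\operatorname{Aut}(K)$, $\mathcal{L}(B)=\{\cdot,{}^{-1},1\}\cup\{\psi\mid\psi\in B\}$ is the group language with a unary function symbol for each $\psi\in B$, interpreted as $\psi$. $\mathcal{L}(B)$-equations are $t(X)=1$ with $t$ an $\mathcal{L}(B)$-term (equivalently a product $\psi_1(x_{i_1}^{\varepsilon_1})\cdots\psi_k(x_{i_k}^{\varepsilon_k})$, $\psi_j\in B$, $\varepsilon_j=\pm1$); systems are arbitrary sets of equations and $V_K(S)$ is the solution set in $K^n$. A subset of $K^n$ is $\mathcal{L}(B)$-algebraic if it equals $V_K(S)$ for some $\mathcal{L}(B)$-system $S$ in $n$ variables. $K$ is an $\mathcal{L}(B)$-equational domain if for every $n$ the union of any two $\mathcal{L}(B)$-algebraic subsets of $K^n$ is $\mathcal{L}(B)$-algebraic. *)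

theory Defs
  imports "HOL-Algebra.Algebra"
begin

text \<open>An L(B)-term in the variables x_0,...,x_{n-1} is represented as a list of
  triples (psi, j, e), standing for the product psi_1(x_{j_1}^{e_1}) ... psi_k(x_{j_k}^{e_k}),
  where e = True means exponent +1 and e = False means exponent -1.
  The empty list is the empty product (the constant 1).\<close>

fun lterm_eval :: "('a, 'c) monoid_scheme \<Rightarrow> (('a \<Rightarrow> 'a) \<times> nat \<times> bool) list \<Rightarrow> 'a list \<Rightarrow> 'a"
  where
    "lterm_eval K [] xs = \<one>\<^bsub>K\<^esub>"
  | "lterm_eval K ((psi, j, e) # t) xs =
       psi (if e then xs ! j else inv\<^bsub>K\<^esub> (xs ! j)) \<otimes>\<^bsub>K\<^esub> lterm_eval K t xs"

definition is_LB_term :: "('a \<Rightarrow> 'a) set \<Rightarrow> nat \<Rightarrow> (('a \<Rightarrow> 'a) \<times> nat \<times> bool) list \<Rightarrow> bool"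
  where "is_LB_term B n t \<longleftrightarrow> (\<forall>(psi, j, e) \<in> set t. psi \<in> B \<and> j < n)"

definition kpoints :: "('a, 'c) monoid_scheme \<Rightarrow> nat \<Rightarrow> 'a list set"
  where "kpoints K n = {xs. length xs = n \<and> set xs \<subseteq> carrier K}"

definition LB_solution_set ::
  "('a, 'c) monoid_scheme \<Rightarrow> nat \<Rightarrow> (('a \<Rightarrow> 'a) \<times> nat \<times> bool) list set \<Rightarrow> 'a list set"
  where "LB_solution_set K n S = {xs \<in> kpoints K n. \<forall>t \<in> S. lterm_eval K t xs = \<one>\<^bsub>K\<^esub>}"

definition LB_algebraic :: "('a, 'c) monoid_scheme \<Rightarrow> ('a \<Rightarrow> 'a) set \<Rightarrow> nat \<Rightarrow> 'a list set \<Rightarrow> bool"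
  where "LB_algebraic K B n Y \<longleftrightarrow>
           (\<exists>S. (\<forall>t \<in> S. is_LB_term B n t) \<and> Y = LB_solution_set K n S)"

definition LB_equational_domain :: "('a, 'c) monoid_scheme \<Rightarrow> ('a \<Rightarrow> 'a) set \<Rightarrow> bool"
  where "LB_equational_domain K B \<longleftrightarrow>
           (\<forall>n Y1 Y2. LB_algebraic K B n Y1 \<longrightarrow> LB_algebraic K B n Y2 \<longrightarrow>
                      LB_algebraic K B n (Y1 \<union> Y2))"

definition direct_power :: "'i set \<Rightarrow> ('a, 'c) monoid_scheme \<Rightarrow> ('i \<Rightarrow> 'a) monoid"
  where "direct_power I G = product_group I (\<lambda>_. G)"

definition coord_aut :: "'i set \<Rightarrow> ('a, 'c) monoid_scheme \<Rightarrow> ('a \<Rightarrow> 'a) \<Rightarrow> ('i \<Rightarrow> 'a) \<Rightarrow> ('i \<Rightarrow> 'a)"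
  where "coord_aut I G phi = (\<lambda>g \<in> carrier (direct_power I G). \<lambda>i \<in> I. phi (g i))"

definition perm_aut :: "'i set \<Rightarrow> ('a, 'c) monoid_scheme \<Rightarrow> ('i \<Rightarrow> 'i) \<Rightarrow> ('i \<Rightarrow> 'a) \<Rightarrow> ('i \<Rightarrow> 'a)"
  where "perm_aut I G p = (\<lambda>g \<in> carrier (direct_power I G). \<lambda>i \<in> I. g (p i))"

end

theory Submission
  imports Defs
begin

text \<open>If B is a monoid of automorphisms of K, then K is an L(B)-equational domain as soon as
  the union M of the two axes {x = 1} and {y = 1} in K^2 is L(B)-algebraic: if M = V(S), then
  V(S1) \<union> V(S2) is cut out by the equations w(t, s) = 1 with w \<in> S, t \<in> S1, s \<in> S2,
  and w(t, s) is again an L(B)-term because \<alpha>(t^-1) can be rewritten factor by factor.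
  For H = G^I, lift each equation w(x, y) = 1 of a system for M(G) coordinatewise, twisting
  the variables by \<sigma>_q and \<sigma>_p for q, p \<in> P. The lifted system says that u(q i) = 1 or
  v(p i) = 1 for all i, q, p, which by transitivity of P means u = 1 or v = 1; so it defines M(H).\<close>

type_synonym 'a lterm = "(('a \<Rightarrow> 'a) \<times> nat \<times> bool) list"

lemma lterm_induct [case_names Nil Cons]:
  "P [] \<Longrightarrow> (\<And>\<psi> j e t. P t \<Longrightarrow> P ((\<psi>, j, e) # t)) \<Longrightarrow> P t"
  by (induction t) auto

lemma is_LB_term_simps [simp]:
  "is_LB_term B n []"
  "is_LB_term B n ((\<psi>, j, e) # t) \<longleftrightarrow> \<psi> \<in> B \<and> j < n \<and> is_LB_term B n t"
  "is_LB_term B n (t @ s) \<longleftrightarrow> is_LB_term B n t \<and> is_LB_term B n s"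
  by (simp_all add: is_LB_term_def ball_Un)

lemma is_LB_term_mono: "is_LB_term B n t \<Longrightarrow> B \<subseteq> C \<Longrightarrow> is_LB_term C n t"
  by (auto simp: is_LB_term_def)

lemma auto_closed: "\<psi> \<in> auto K \<Longrightarrow> x \<in> carrier K \<Longrightarrow> \<psi> x \<in> carrier K"
  by (auto simp: auto_def hom_def)

lemma auto_mult: "\<psi> \<in> auto K \<Longrightarrow> x \<in> carrier K \<Longrightarrow> y \<in> carrier K \<Longrightarrow>
    \<psi> (x \<otimes>\<^bsub>K\<^esub> y) = \<psi> x \<otimes>\<^bsub>K\<^esub> \<psi> y"
  by (auto simp: auto_def hom_def)

lemma auto_inv: "group K \<Longrightarrow> \<psi> \<in> auto K \<Longrightarrow> x \<in> carrier K \<Longrightarrow>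
    \<psi> (inv\<^bsub>K\<^esub> x) = inv\<^bsub>K\<^esub> (\<psi> x)"
  by (simp add: auto_def group_hom.hom_inv group_hom_axioms_def group_hom_def)

lemma auto_one: "group K \<Longrightarrow> \<psi> \<in> auto K \<Longrightarrow> \<psi> \<one>\<^bsub>K\<^esub> = \<one>\<^bsub>K\<^esub>"
  by (simp add: auto_def group_hom.hom_one group_hom_axioms_def group_hom_def)

lemma compose_in_auto: "group K \<Longrightarrow> a \<in> auto K \<Longrightarrow> b \<in> auto K \<Longrightarrow> compose (carrier K) a b \<in> auto K"
  using subgroup.m_closed[OF group.subgroup_auto] by (fastforce simp: BijGroup_def auto_def)

lemma kpoints_nth_closed: "xs \<in> kpoints K n \<Longrightarrow> j < n \<Longrightarrow> xs ! j \<in> carrier K"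
  by (auto simp: kpoints_def)

lemma kpoints_2E:
  assumes "xs \<in> kpoints K 2"
  obtains x y where "xs = [x, y]" and "x \<in> carrier K" and "y \<in> carrier K"
  using assms unfolding kpoints_def
  by (cases xs; cases "tl xs"; auto simp: numeral_2_eq_2)

definition lterm_inv :: "'a lterm \<Rightarrow> 'a lterm"
  where "lterm_inv t = rev (map (\<lambda>(\<psi>, j, e). (\<psi>, j, \<not> e)) t)"

definition lterm_aut :: "('a, 'c) monoid_scheme \<Rightarrow> ('a \<Rightarrow> 'a) \<Rightarrow> 'a lterm \<Rightarrow> 'a lterm"
  where "lterm_aut K \<alpha> t = map (\<lambda>(\<psi>, j, e). (compose (carrier K) \<alpha> \<psi>, j, e)) t"

lemma is_LB_term_inv [simp]: "is_LB_term B n (lterm_inv t) \<longleftrightarrow> is_LB_term B n t"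
  by (induction t rule: lterm_induct) (auto simp: lterm_inv_def)

lemma is_LB_term_aut:
  "\<alpha> \<in> B \<Longrightarrow> (\<And>\<psi>. \<psi> \<in> B \<Longrightarrow> compose (carrier K) \<alpha> \<psi> \<in> B) \<Longrightarrow>
    is_LB_term B n t \<Longrightarrow> is_LB_term B n (lterm_aut K \<alpha> t)"
  by (induction t rule: lterm_induct) (auto simp: lterm_aut_def)

definition lterm_subst :: "('a, 'c) monoid_scheme \<Rightarrow> 'a lterm list \<Rightarrow> 'a lterm \<Rightarrow> 'a lterm"
  where "lterm_subst K ts w =
    concat (map (\<lambda>(\<alpha>, j, e). lterm_aut K \<alpha> (if e then ts ! j else lterm_inv (ts ! j))) w)"

lemma is_LB_term_subst:
  assumes "\<And>a b. a \<in> B \<Longrightarrow> b \<in> B \<Longrightarrow> compose (carrier K) a b \<in> B"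
    and "\<forall>t \<in> set ts. is_LB_term B n t"
  shows "is_LB_term B (length ts) w \<Longrightarrow> is_LB_term B n (lterm_subst K ts w)"
  by (induction w rule: lterm_induct) (auto simp: lterm_subst_def assms is_LB_term_aut)

context
  fixes K :: "('a, 'c) monoid_scheme" and n :: nat and xs :: "'a list"
  assumes K: "group K" and xs: "xs \<in> kpoints K n"
begin

interpretation group K by (rule K)

lemma lterm_eval_closed: "is_LB_term (auto K) n t \<Longrightarrow> lterm_eval K t xs \<in> carrier K"
  by (induction t rule: lterm_induct) (auto simp: auto_closed kpoints_nth_closed[OF xs])

lemma lterm_eval_append:
  "is_LB_term (auto K) n t \<Longrightarrow> is_LB_term (auto K) n s \<Longrightarrow>
    lterm_eval K (t @ s) xs = lterm_eval K t xs \<otimes>\<^bsub>K\<^esub> lterm_eval K s xs"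
  by (induction t rule: lterm_induct)
    (auto simp: m_assoc auto_closed lterm_eval_closed kpoints_nth_closed[OF xs])

lemma lterm_eval_inv:
  "is_LB_term (auto K) n t \<Longrightarrow> lterm_eval K (lterm_inv t) xs = inv\<^bsub>K\<^esub> (lterm_eval K t xs)"
proof (induction t rule: lterm_induct)
  case Nil
  then show ?case by (simp add: lterm_inv_def)
next
  case (Cons \<psi> j e t)
  have x: "xs ! j \<in> carrier K" and \<psi>: "\<psi> \<in> auto K"
    using Cons.prems kpoints_nth_closed[OF xs] by auto
  have "lterm_eval K (lterm_inv ((\<psi>, j, e) # t)) xs
      = lterm_eval K (lterm_inv t @ [(\<psi>, j, \<not> e)]) xs"
    by (simp add: lterm_inv_def)
  also have "\<dots> = inv\<^bsub>K\<^esub> (lterm_eval K t xs) \<otimes>\<^bsub>K\<^esub> inv\<^bsub>K\<^esub> (\<psi> (if e then xs ! j else inv\<^bsub>K\<^esub> (xs ! j)))"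
    using Cons x \<psi> by (simp add: lterm_eval_append auto_inv[OF K] auto_closed)
  also have "\<dots> = inv\<^bsub>K\<^esub> (lterm_eval K ((\<psi>, j, e) # t) xs)"
    using Cons.prems x \<psi> by (simp add: inv_mult_group auto_closed lterm_eval_closed)
  finally show ?case .
qed

lemma lterm_eval_aut:
  "\<alpha> \<in> auto K \<Longrightarrow> is_LB_term (auto K) n t \<Longrightarrow>
    lterm_eval K (lterm_aut K \<alpha> t) xs = \<alpha> (lterm_eval K t xs)"
  by (induction t rule: lterm_induct)
    (auto simp: lterm_aut_def compose_def auto_one[OF K] auto_mult auto_closed
      lterm_eval_closed kpoints_nth_closed[OF xs])

lemma lterm_eval_subst:
  assumes "\<forall>t \<in> set ts. is_LB_term (auto K) n t"
  shows "is_LB_term (auto K) (length ts) w \<Longrightarrow>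
    lterm_eval K (lterm_subst K ts w) xs = lterm_eval K w (map (\<lambda>t. lterm_eval K t xs) ts)"
proof (induction w rule: lterm_induct)
  case Nil
  then show ?case by (simp add: lterm_subst_def)
next
  case (Cons \<alpha> j e w)
  let ?s = "if e then ts ! j else lterm_inv (ts ! j)"
  have \<alpha>: "\<alpha> \<in> auto K" and j: "j < length ts" and s: "is_LB_term (auto K) n ?s"
    using Cons.prems assms by auto
  have "lterm_eval K (lterm_subst K ts ((\<alpha>, j, e) # w)) xs
      = lterm_eval K (lterm_aut K \<alpha> ?s @ lterm_subst K ts w) xs"
    by (simp add: lterm_subst_def)
  also have "\<dots> = \<alpha> (lterm_eval K ?s xs) \<otimes>\<^bsub>K\<^esub> lterm_eval K (lterm_subst K ts w) xs"
    using Cons.prems assms \<alpha> s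
    by (simp add: lterm_eval_append lterm_eval_aut is_LB_term_aut compose_in_auto[OF K] is_LB_term_subst)
  also have "\<dots> = lterm_eval K ((\<alpha>, j, e) # w) (map (\<lambda>t. lterm_eval K t xs) ts)"
    using Cons assms j by (simp add: lterm_eval_inv)
  finally show ?case .
qed

end

lemma LB_algebraic_Inter:
  assumes "\<And>i. i \<in> J \<Longrightarrow> LB_algebraic K B n (Y i)"
  shows "LB_algebraic K B n (kpoints K n \<inter> (\<Inter>i \<in> J. Y i))"
proof -
  obtain S where S: "\<And>i. i \<in> J \<Longrightarrow> (\<forall>t \<in> S i. is_LB_term B n t) \<and> Y i = LB_solution_set K n (S i)"
    using assms unfolding LB_algebraic_def by metis
  have "kpoints K n \<inter> (\<Inter>i \<in> J. Y i) = LB_solution_set K n (\<Union>i \<in> J. S i)"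
    using S by (auto simp: LB_solution_set_def)
  then show ?thesis
    unfolding LB_algebraic_def using S by (intro exI[of _ "\<Union>i \<in> J. S i"]) auto
qed

lemma LB_algebraic_preimage:
  assumes K: "group K" and B: "B \<subseteq> auto K"
    and closed: "\<And>a b. a \<in> B \<Longrightarrow> b \<in> B \<Longrightarrow> compose (carrier K) a b \<in> B"
    and Y: "LB_algebraic K B (length ts) Y" and ts: "\<forall>t \<in> set ts. is_LB_term B n t"
  shows "LB_algebraic K B n {xs \<in> kpoints K n. map (\<lambda>t. lterm_eval K t xs) ts \<in> Y}"
proof -
  obtain S where S: "\<forall>w \<in> S. is_LB_term B (length ts) w" and Y_eq: "Y = LB_solution_set K (length ts) S"
    using Y unfolding LB_algebraic_def by blast
  have ts_auto: "\<forall>t \<in> set ts. is_LB_term (auto K) n t" using ts B is_LB_term_mono by blast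
  have term_values: "map (\<lambda>t. lterm_eval K t xs) ts \<in> kpoints K (length ts)" if "xs \<in> kpoints K n" for xs
    using lterm_eval_closed[OF K that] ts_auto by (auto simp: kpoints_def)
  have subst_eval: "lterm_eval K (lterm_subst K ts w) xs = lterm_eval K w (map (\<lambda>t. lterm_eval K t xs) ts)"
    if "xs \<in> kpoints K n" "w \<in> S" for xs w
    using lterm_eval_subst[OF K that(1) ts_auto] S B that(2) is_LB_term_mono by blast
  have "{xs \<in> kpoints K n. map (\<lambda>t. lterm_eval K t xs) ts \<in> Y}
      = LB_solution_set K n (lterm_subst K ts ` S)"
    using term_values subst_eval by (auto simp: Y_eq LB_solution_set_def)
  moreover have "\<forall>t \<in> lterm_subst K ts ` S. is_LB_term B n t"
    using S is_LB_term_subst[OF closed ts] by blast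
  ultimately show ?thesis unfolding LB_algebraic_def by blast
qed

lemma carrier_AutoGroup [simp]: "carrier (AutoGroup K) = auto K"
  by (simp add: AutoGroup_def BijGroup_def)

lemma one_AutoGroup [simp]: "\<one>\<^bsub>AutoGroup K\<^esub> = (\<lambda>x \<in> carrier K. x)"
  by (simp add: AutoGroup_def BijGroup_def)

lemma mult_AutoGroup [simp]:
  "a \<in> auto K \<Longrightarrow> b \<in> auto K \<Longrightarrow> a \<otimes>\<^bsub>AutoGroup K\<^esub> b = compose (carrier K) a b"
  by (simp add: AutoGroup_def BijGroup_def auto_def)

lemma subgroup_AutoGroupD:
  assumes "subgroup B (AutoGroup K)"
  shows "B \<subseteq> auto K" and "\<And>a b. a \<in> B \<Longrightarrow> b \<in> B \<Longrightarrow> compose (carrier K) a b \<in> B"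
    and "(\<lambda>x \<in> carrier K. x) \<in> B"
proof -
  show B: "B \<subseteq> auto K" using subgroup.subset[OF assms] by simp
  show "\<And>a b. a \<in> B \<Longrightarrow> b \<in> B \<Longrightarrow> compose (carrier K) a b \<in> B"
    using subgroup.m_closed[OF assms] B mult_AutoGroup by (metis subsetD)
  show "(\<lambda>x \<in> carrier K. x) \<in> B" using subgroup.one_closed[OF assms] by simp
qed

definition axes :: "('a, 'c) monoid_scheme \<Rightarrow> 'a list set"
  where "axes K = {xs \<in> kpoints K 2. xs ! 0 = \<one>\<^bsub>K\<^esub> \<or> xs ! 1 = \<one>\<^bsub>K\<^esub>}"

lemma pair_in_axes_iff:
  "[x, y] \<in> axes K \<longleftrightarrow> x \<in> carrier K \<and> y \<in> carrier K \<and> (x = \<one>\<^bsub>K\<^esub> \<or> y = \<one>\<^bsub>K\<^esub>)"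
  by (auto simp: axes_def kpoints_def)

lemma LB_equational_domain_if_axes_algebraic:
  assumes K: "group K" and B: "B \<subseteq> auto K"
    and closed: "\<And>a b. a \<in> B \<Longrightarrow> b \<in> B \<Longrightarrow> compose (carrier K) a b \<in> B"
    and axes: "LB_algebraic K B 2 (axes K)"
  shows "LB_equational_domain K B"
  unfolding LB_equational_domain_def
proof (intro allI impI)
  fix n Y1 Y2
  assume "LB_algebraic K B n Y1" "LB_algebraic K B n Y2"
  then obtain S1 S2 where S1: "\<forall>t \<in> S1. is_LB_term B n t" "Y1 = LB_solution_set K n S1"
    and S2: "\<forall>t \<in> S2. is_LB_term B n t" "Y2 = LB_solution_set K n S2"
    unfolding LB_algebraic_def by blast
  let ?M = "\<lambda>(t, s). {xs \<in> kpoints K n. map (\<lambda>u. lterm_eval K u xs) [t, s] \<in> axes K}"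
  have "lterm_eval K t xs \<in> carrier K" if "xs \<in> kpoints K n" "t \<in> S1 \<union> S2" for xs t
    using lterm_eval_closed[OF K that(1)] S1(1) S2(1) that(2) B is_LB_term_mono by blast
  then have "Y1 \<union> Y2 = kpoints K n \<inter> (\<Inter>ts \<in> S1 \<times> S2. ?M ts)"
    by (auto simp: S1(2) S2(2) LB_solution_set_def pair_in_axes_iff)
  moreover have "LB_algebraic K B n (?M (t, s))" if "t \<in> S1" "s \<in> S2" for t s
  proof -
    have "LB_algebraic K B (length [t, s]) (axes K)" using axes by (simp add: numeral_2_eq_2)
    from LB_algebraic_preimage[OF K B closed this] show ?thesis using that S1(1) S2(1) by simp
  qed
  ultimately show "LB_algebraic K B n (Y1 \<union> Y2)"
    using LB_algebraic_Inter by (metis (no_types, lifting) SigmaE)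
qed

lemma axes_algebraic_if_LB_equational_domain:
  assumes K: "group K" and identity: "(\<lambda>x \<in> carrier K. x) \<in> B" and ED: "LB_equational_domain K B"
  shows "LB_algebraic K B 2 (axes K)"
proof -
  interpret group K by (rule K)
  have axis: "LB_algebraic K B 2 {xs \<in> kpoints K 2. xs ! k = \<one>\<^bsub>K\<^esub>}" if "k < 2" for k
  proof -
    have "{xs \<in> kpoints K 2. xs ! k = \<one>\<^bsub>K\<^esub>} = LB_solution_set K 2 {[(\<lambda>x \<in> carrier K. x, k, True)]}"
      using kpoints_nth_closed[of _ K 2 k] that by (auto simp: LB_solution_set_def)
    then show ?thesis
      unfolding LB_algebraic_def using identity that by (intro exI[of _ "{[(\<lambda>x \<in> carrier K. x, k, True)]}"]) auto
  qed
  have "axes K = {xs \<in> kpoints K 2. xs ! 0 = \<one>\<^bsub>K\<^esub>} \<union> {xs \<in> kpoints K 2. xs ! 1 = \<one>\<^bsub>K\<^esub>}"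
    by (auto simp: axes_def)
  then show ?thesis
    using ED axis[of 0] axis[of 1] unfolding LB_equational_domain_def by simp
qed

theorem LB_equational_domain_iff_axes_algebraic:
  assumes "group K" and "subgroup B (AutoGroup K)"
  shows "LB_equational_domain K B \<longleftrightarrow> LB_algebraic K B 2 (axes K)"
  using LB_equational_domain_if_axes_algebraic axes_algebraic_if_LB_equational_domain
    subgroup_AutoGroupD[OF assms(2)] assms(1) by blast

lemma in_autoI:
  assumes "f \<in> hom K K" and "f \<in> extensional (carrier K)" and "g \<in> carrier K \<rightarrow> carrier K"
    and "\<And>x. x \<in> carrier K \<Longrightarrow> g (f x) = x" and "\<And>x. x \<in> carrier K \<Longrightarrow> f (g x) = x"
  shows "f \<in> auto K"
proof -
  have "bij_betw f (carrier K) (carrier K)"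
    using assms by (intro bij_betw_byWitness[where f' = g]) (auto simp: hom_def)
  then show ?thesis using assms(1,2) by (simp add: auto_def Bij_def)
qed

lemma restrict_eq_iff: "(\<lambda>i \<in> I. f i) = (\<lambda>i \<in> I. g i) \<longleftrightarrow> (\<forall>i \<in> I. f i = g i)"
  by (metis restrict_apply' restrict_ext)

lemma carrier_direct_power [simp]: "carrier (direct_power I G) = (\<Pi>\<^sub>E i \<in> I. carrier G)"
  and one_direct_power [simp]: "\<one>\<^bsub>direct_power I G\<^esub> = (\<lambda>i \<in> I. \<one>\<^bsub>G\<^esub>)"
  and mult_direct_power [simp]: "x \<otimes>\<^bsub>direct_power I G\<^esub> y = (\<lambda>i \<in> I. x i \<otimes>\<^bsub>G\<^esub> y i)"
  by (simp_all add: direct_power_def)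

lemma group_direct_power: "group G \<Longrightarrow> group (direct_power I G)"
  by (simp add: direct_power_def)

lemma inv_direct_power:
  "group G \<Longrightarrow> x \<in> carrier (direct_power I G) \<Longrightarrow> inv\<^bsub>direct_power I G\<^esub> x = (\<lambda>i \<in> I. inv\<^bsub>G\<^esub> (x i))"
  by (simp add: direct_power_def)

lemma coord_aut_apply [simp]:
  "x \<in> carrier (direct_power I G) \<Longrightarrow> coord_aut I G \<phi> x = (\<lambda>i \<in> I. \<phi> (x i))"
  by (simp add: coord_aut_def)

lemma perm_aut_apply [simp]:
  "x \<in> carrier (direct_power I G) \<Longrightarrow> perm_aut I G p x = (\<lambda>i \<in> I. x (p i))"
  by (simp add: perm_aut_def)

lemma perm_aut_closed:
  "p \<in> I \<rightarrow> I \<Longrightarrow> x \<in> carrier (direct_power I G) \<Longrightarrow> perm_aut I G p x \<in> carrier (direct_power I G)"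
  by (auto simp: PiE_iff)

lemma coord_perm_aut_apply:
  assumes p: "p \<in> I \<rightarrow> I" and x: "x \<in> carrier (direct_power I G)"
  shows "compose (carrier (direct_power I G)) (coord_aut I G \<phi>) (perm_aut I G p) x = (\<lambda>i \<in> I. \<phi> (x (p i)))"
proof -
  have "coord_aut I G \<phi> (perm_aut I G p x) = (\<lambda>i \<in> I. \<phi> (perm_aut I G p x i))"
    by (rule coord_aut_apply[OF perm_aut_closed[OF p x]])
  then show ?thesis using p x by (auto simp: compose_def intro!: restrict_ext)
qed

lemma coord_aut_in_auto:
  assumes G: "group G" and \<phi>: "\<phi> \<in> auto G"
  shows "coord_aut I G \<phi> \<in> auto (direct_power I G)"
proof (rule in_autoI[where g = "coord_aut I G (inv_into (carrier G) \<phi>)"])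
  interpret group G by (rule G)
  have bij: "bij_betw \<phi> (carrier G) (carrier G)" and hom: "\<phi> \<in> hom G G"
    using \<phi> by (auto simp: auto_def Bij_def)
  have inv_closed: "inv_into (carrier G) \<phi> x \<in> carrier G" if "x \<in> carrier G" for x
    using bij that by (metis bij_betw_def inv_into_into)
  show "coord_aut I G \<phi> \<in> hom (direct_power I G) (direct_power I G)"
  proof (rule homI)
    show "coord_aut I G \<phi> x \<in> carrier (direct_power I G)" if "x \<in> carrier (direct_power I G)" for x
      using that by (auto simp: PiE_iff hom_in_carrier[OF hom])
    show "coord_aut I G \<phi> (x \<otimes>\<^bsub>direct_power I G\<^esub> y) =
        coord_aut I G \<phi> x \<otimes>\<^bsub>direct_power I G\<^esub> coord_aut I G \<phi> y"
      if "x \<in> carrier (direct_power I G)" "y \<in> carrier (direct_power I G)" for x y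
      using that by (auto simp: PiE_iff hom_mult[OF hom] intro!: restrict_ext)
  qed
  show "coord_aut I G \<phi> \<in> extensional (carrier (direct_power I G))"
    by (simp add: coord_aut_def)
  show "coord_aut I G (inv_into (carrier G) \<phi>)
      \<in> carrier (direct_power I G) \<rightarrow> carrier (direct_power I G)"
    using inv_closed by (auto simp: PiE_iff)
  show "coord_aut I G (inv_into (carrier G) \<phi>) (coord_aut I G \<phi> x) = x"
    if "x \<in> carrier (direct_power I G)" for x
    using that by (auto simp: PiE_iff hom_in_carrier[OF hom] bij_betw_inv_into_left[OF bij]
        intro!: extensionalityI[where A = I])
  show "coord_aut I G \<phi> (coord_aut I G (inv_into (carrier G) \<phi>) x) = x"
    if "x \<in> carrier (direct_power I G)" for x
    using that by (auto simp: PiE_iff inv_closed bij_betw_inv_into_right[OF bij]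
        intro!: extensionalityI[where A = I])
qed

lemma perm_aut_in_auto:
  assumes G: "group G" and p: "bij_betw p I I"
  shows "perm_aut I G p \<in> auto (direct_power I G)"
proof (rule in_autoI[where g = "perm_aut I G (inv_into I p)"])
  have p_into: "p i \<in> I" and q_into: "inv_into I p i \<in> I" if "i \<in> I" for i
    using p that by (auto simp: bij_betw_def inv_into_into)
  show "perm_aut I G p \<in> hom (direct_power I G) (direct_power I G)"
  proof (rule homI)
    show "perm_aut I G p x \<in> carrier (direct_power I G)" if "x \<in> carrier (direct_power I G)" for x
      using that p_into by (intro perm_aut_closed) auto
    show "perm_aut I G p (x \<otimes>\<^bsub>direct_power I G\<^esub> y) =
        perm_aut I G p x \<otimes>\<^bsub>direct_power I G\<^esub> perm_aut I G p y"
      if "x \<in> carrier (direct_power I G)" "y \<in> carrier (direct_power I G)" for x y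
    proof -
      have "x \<otimes>\<^bsub>direct_power I G\<^esub> y \<in> carrier (direct_power I G)"
        by (rule monoid.m_closed[OF group.is_monoid[OF group_direct_power[OF G]] that])
      then show ?thesis using that p_into by (auto intro!: restrict_ext)
    qed
  qed
  show "perm_aut I G p \<in> extensional (carrier (direct_power I G))"
    by (simp add: perm_aut_def)
  show "perm_aut I G (inv_into I p) \<in> carrier (direct_power I G) \<rightarrow> carrier (direct_power I G)"
    using q_into by (auto simp: PiE_iff)
  show "perm_aut I G (inv_into I p) (perm_aut I G p x) = x"
    if "x \<in> carrier (direct_power I G)" for x
    using that p_into q_into p
    by (auto simp: PiE_iff bij_betw_inv_into_right intro!: extensionalityI[where A = I])
  show "perm_aut I G p (perm_aut I G (inv_into I p) x) = x"
    if "x \<in> carrier (direct_power I G)" for x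
    using that p_into q_into p
    by (auto simp: PiE_iff bij_betw_inv_into_left intro!: extensionalityI[where A = I])
qed

definition lterm_lift :: "'i set \<Rightarrow> ('a, 'c) monoid_scheme \<Rightarrow> ('i \<Rightarrow> 'i) list \<Rightarrow> 'a lterm \<Rightarrow> ('i \<Rightarrow> 'a) lterm"
  where "lterm_lift I G ps w = map (\<lambda>(\<phi>, j, e).
    (compose (carrier (direct_power I G)) (coord_aut I G \<phi>) (perm_aut I G (ps ! j)), j, e)) w"

lemma is_LB_term_lift:
  assumes "\<And>\<phi> j. \<phi> \<in> A0 \<Longrightarrow> j < length ps \<Longrightarrow>
    compose (carrier (direct_power I G)) (coord_aut I G \<phi>) (perm_aut I G (ps ! j)) \<in> B"
  shows "is_LB_term A0 (length ps) w \<Longrightarrow> is_LB_term B (length ps) (lterm_lift I G ps w)"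
  by (induction w rule: lterm_induct) (auto simp: lterm_lift_def assms simp del: carrier_direct_power)

lemma lterm_eval_lift:
  assumes G: "group G" and ps: "\<forall>p \<in> set ps. p \<in> I \<rightarrow> I"
    and xs: "xs \<in> kpoints (direct_power I G) (length ps)"
  shows "is_LB_term B (length ps) w \<Longrightarrow>
    lterm_eval (direct_power I G) (lterm_lift I G ps w) xs = (\<lambda>i \<in> I. lterm_eval G w (map2 (\<lambda>x p. x (p i)) xs ps))"
proof (induction w rule: lterm_induct)
  case Nil
  then show ?case by (simp add: lterm_lift_def)
next
  case (Cons \<phi> j e w)
  let ?H = "direct_power I G" and ?q = "ps ! j"
  let ?y = "if e then xs ! j else inv\<^bsub>?H\<^esub> (xs ! j)"
  have j: "j < length ps" using Cons.prems by simp
  then have q: "?q \<in> I \<rightarrow> I" using ps by simp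
  have xj: "xs ! j \<in> carrier ?H" using kpoints_nth_closed[OF xs j] .
  then have y: "?y \<in> carrier ?H" using group.inv_closed[OF group_direct_power[OF G] xj] by presburger
  have xs_len: "length xs = length ps" using xs by (simp add: kpoints_def)
  have "compose (carrier ?H) (coord_aut I G \<phi>) (perm_aut I G ?q) ?y
      = (\<lambda>i \<in> I. \<phi> (if e then (xs ! j) (?q i) else inv\<^bsub>G\<^esub> ((xs ! j) (?q i))))"
    unfolding coord_perm_aut_apply[OF q y]
    using q xj by (auto simp: inv_direct_power[OF G] intro!: restrict_ext)
  then show ?case
    using Cons j xs_len by (auto simp: lterm_lift_def intro!: restrict_ext)
qed

lemma pair_in_axes_direct_power_iff:
  assumes P: "\<forall>p \<in> P. p \<in> I \<rightarrow> I" and transitive: "\<forall>i \<in> I. \<forall>j \<in> I. \<exists>p \<in> P. p i = j"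
    and u: "u \<in> carrier (direct_power I G)" and v: "v \<in> carrier (direct_power I G)"
  shows "[u, v] \<in> axes (direct_power I G) \<longleftrightarrow> (\<forall>q \<in> P. \<forall>p \<in> P. \<forall>i \<in> I. [u (q i), v (p i)] \<in> axes G)"
proof -
  have one_iff: "x = (\<lambda>i \<in> I. \<one>\<^bsub>G\<^esub>) \<longleftrightarrow> (\<forall>i \<in> I. x i = \<one>\<^bsub>G\<^esub>)"
    if "x \<in> carrier (direct_power I G)" for x
    using that by (auto simp: PiE_iff intro: extensionalityI[where A = I])
  have "[u, v] \<in> axes (direct_power I G) \<longleftrightarrow> (\<forall>i \<in> I. u i = \<one>\<^bsub>G\<^esub>) \<or> (\<forall>i \<in> I. v i = \<one>\<^bsub>G\<^esub>)"
    using u v by (simp add: pair_in_axes_iff one_iff)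
  also have "\<dots> \<longleftrightarrow> (\<forall>q \<in> P. \<forall>p \<in> P. \<forall>i \<in> I. u (q i) = \<one>\<^bsub>G\<^esub> \<or> v (p i) = \<one>\<^bsub>G\<^esub>)"
  proof
    assume "(\<forall>i \<in> I. u i = \<one>\<^bsub>G\<^esub>) \<or> (\<forall>i \<in> I. v i = \<one>\<^bsub>G\<^esub>)"
    then show "\<forall>q \<in> P. \<forall>p \<in> P. \<forall>i \<in> I. u (q i) = \<one>\<^bsub>G\<^esub> \<or> v (p i) = \<one>\<^bsub>G\<^esub>"
      using P by blast
  next
    assume all: "\<forall>q \<in> P. \<forall>p \<in> P. \<forall>i \<in> I. u (q i) = \<one>\<^bsub>G\<^esub> \<or> v (p i) = \<one>\<^bsub>G\<^esub>"
    show "(\<forall>i \<in> I. u i = \<one>\<^bsub>G\<^esub>) \<or> (\<forall>i \<in> I. v i = \<one>\<^bsub>G\<^esub>)"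
    proof (rule ccontr)
      assume "\<not> ?thesis"
      then obtain a b where a: "a \<in> I" "u a \<noteq> \<one>\<^bsub>G\<^esub>" and b: "b \<in> I" "v b \<noteq> \<one>\<^bsub>G\<^esub>"
        by blast
      obtain q p where "q \<in> P" "q a = a" "p \<in> P" "p a = b"
        using transitive a(1) b(1) by metis
      then show False using all a b by metis
    qed
  qed
  also have "\<dots> \<longleftrightarrow> (\<forall>q \<in> P. \<forall>p \<in> P. \<forall>i \<in> I. [u (q i), v (p i)] \<in> axes G)"
    using u v P by (auto simp: pair_in_axes_iff PiE_iff Pi_iff)
  finally show ?thesis .
qed

lemma axes_direct_power_algebraic:
  assumes G: "group G" and P: "\<forall>p \<in> P. p \<in> I \<rightarrow> I"
    and transitive: "\<forall>i \<in> I. \<forall>j \<in> I. \<exists>p \<in> P. p i = j"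
    and B: "\<forall>\<phi> \<in> A0. \<forall>p \<in> P.
      compose (carrier (direct_power I G)) (coord_aut I G \<phi>) (perm_aut I G p) \<in> B"
    and axes: "LB_algebraic G A0 2 (axes G)"
  shows "LB_algebraic (direct_power I G) B 2 (axes (direct_power I G))"
proof -
  let ?H = "direct_power I G"
  obtain S0 where S0: "\<forall>w \<in> S0. is_LB_term A0 2 w" and axes_eq: "axes G = LB_solution_set G 2 S0"
    using axes unfolding LB_algebraic_def by blast
  define S where "S = {lterm_lift I G [q, p] w | q p w. q \<in> P \<and> p \<in> P \<and> w \<in> S0}"
  have "is_LB_term B (length [q, p]) (lterm_lift I G [q, p] w)" if "q \<in> P" "p \<in> P" "w \<in> S0" for q p w
  proof (rule is_LB_term_lift)
    show "compose (carrier ?H) (coord_aut I G \<phi>) (perm_aut I G ([q, p] ! j)) \<in> B"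
      if "\<phi> \<in> A0" "j < length [q, p]" for \<phi> j
      using B nth_mem[OF that(2)] \<open>q \<in> P\<close> \<open>p \<in> P\<close> \<open>\<phi> \<in> A0\<close> by auto
    show "is_LB_term A0 (length [q, p]) w" using S0 \<open>w \<in> S0\<close> by (simp add: numeral_2_eq_2)
  qed
  then have "\<forall>t \<in> S. is_LB_term B 2 t" by (auto simp: S_def numeral_2_eq_2)
  moreover have "axes ?H = LB_solution_set ?H 2 S"
  proof (rule Set.set_eqI)
    fix xs
    show "xs \<in> axes ?H \<longleftrightarrow> xs \<in> LB_solution_set ?H 2 S"
    proof (cases "xs \<in> kpoints ?H 2")
      case False
      then show ?thesis by (simp add: axes_def LB_solution_set_def)
    next
      case True
      then obtain u v where xs: "xs = [u, v]" and u: "u \<in> carrier ?H" and v: "v \<in> carrier ?H"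
        by (rule kpoints_2E)
      have lift_iff: "lterm_eval ?H (lterm_lift I G [q, p] w) xs = \<one>\<^bsub>?H\<^esub> \<longleftrightarrow>
          (\<forall>i \<in> I. lterm_eval G w [u (q i), v (p i)] = \<one>\<^bsub>G\<^esub>)"
        if "q \<in> P" "p \<in> P" "w \<in> S0" for q p w
        using lterm_eval_lift[OF G, where ps = "[q, p]" and B = A0] that P S0 True
        by (auto simp: xs numeral_2_eq_2 restrict_eq_iff)
      have "xs \<in> LB_solution_set ?H 2 S \<longleftrightarrow>
          (\<forall>q \<in> P. \<forall>p \<in> P. \<forall>w \<in> S0. lterm_eval ?H (lterm_lift I G [q, p] w) xs = \<one>\<^bsub>?H\<^esub>)"
        using True unfolding LB_solution_set_def S_def by blast
      also have "\<dots> \<longleftrightarrow>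
          (\<forall>q \<in> P. \<forall>p \<in> P. \<forall>i \<in> I. \<forall>w \<in> S0. lterm_eval G w [u (q i), v (p i)] = \<one>\<^bsub>G\<^esub>)"
        using lift_iff by blast
      also have "\<dots> \<longleftrightarrow> (\<forall>q \<in> P. \<forall>p \<in> P. \<forall>i \<in> I. [u (q i), v (p i)] \<in> axes G)"
        using u v P by (auto simp: axes_eq LB_solution_set_def kpoints_def PiE_iff Pi_iff)
      also have "\<dots> \<longleftrightarrow> xs \<in> axes ?H"
        using pair_in_axes_direct_power_iff[OF P transitive u v] xs by simp
      finally show ?thesis by simp
    qed
  qed
  ultimately show ?thesis unfolding LB_algebraic_def by blast
qed

theorem corollary2:
  fixes G :: "('a, 'c) monoid_scheme" and A0 :: "('a \<Rightarrow> 'a) set"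
    and I :: "'i set" and P :: "('i \<Rightarrow> 'i) set"
  assumes "group G"
    and "subgroup A0 (AutoGroup G)"
    and "LB_equational_domain G A0"
    and "\<forall>p \<in> P. bij_betw p I I"
    and "\<forall>i \<in> I. \<forall>j \<in> I. \<exists>p \<in> P. p i = j"
  shows "LB_equational_domain (direct_power I G)
           (generate (AutoGroup (direct_power I G))
              (coord_aut I G ` A0 \<union> perm_aut I G ` P))"
proof -
  let ?H = "direct_power I G"
  let ?A = "generate (AutoGroup ?H) (coord_aut I G ` A0 \<union> perm_aut I G ` P)"
  have H: "group ?H" using group_direct_power[OF assms(1)] .
  have "coord_aut I G ` A0 \<union> perm_aut I G ` P \<subseteq> carrier (AutoGroup ?H)"
    using coord_aut_in_auto[OF assms(1)] perm_aut_in_auto[OF assms(1)]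
      subgroup_AutoGroupD(1)[OF assms(2)] assms(4) by fastforce
  then have A: "subgroup ?A (AutoGroup ?H)"
    by (rule group.generate_is_subgroup[OF group.AutoGroup[OF H]])
  have "\<forall>\<phi> \<in> A0. \<forall>p \<in> P. compose (carrier ?H) (coord_aut I G \<phi>) (perm_aut I G p) \<in> ?A"
    using subgroup_AutoGroupD(2)[OF A] by (blast intro: generate.incl)
  moreover have "\<forall>p \<in> P. p \<in> I \<rightarrow> I" using assms(4) by (auto simp: bij_betw_def)
  moreover have "LB_algebraic G A0 2 (axes G)"
    using assms(3) LB_equational_domain_iff_axes_algebraic[OF assms(1,2)] by blast
  ultimately have "LB_algebraic ?H ?A 2 (axes ?H)"
    using axes_direct_power_algebraic[OF assms(1) _ assms(5)] by blast
  then show ?thesis using LB_equational_domain_iff_axes_algebraic[OF H A] by blast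
qed

end
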